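(* Let $n\geq 5$ be an odd integer, $m=\frac{n+1}{2}$, and let $(D;H)$ be a based diagram of $(K_n;H)$ with $H=v_1v_2\cdots v_nv_1$ such that $M(D;H)=M_n$. Then $$c_D(e_{(m,n)})=c_D(e_{(1,m)})+c_D(e_{(2,n)})+1.$$
   Context: $K_n$ is the complete graph with vertices $v_1,\dots,v_n$, lying on $H$ in this cyclic order. A based diagram $(D;H)$ of $(K_n;H)$ is a diagram of $K_n$ on $S^2$ in which $H$ is drawn on the equator and every other edge diagram lies (apart from its endpoints) in the Northern or Southern Hemisphere; as in the paper's drawings, the edges in each hemisphere are drawn so that two edge diagrams not in $H$ intersect in their interiors if and only if they lie in the same hemisphere and their endpoints alternate along $H$. $e_{(i,j)}$ denotes the edge diagram joining $v_i,v_j$, and for an edge diagram $e$, $c_D(e)$ is the number of edge diagrams of $D$ that intersect the interior of $e$. The matrix $M(D;H)=(a_{(i,j)})$ has $a_{(i,j)}=0$ if $j\le i+1$ or $(i,j)=(1,n)$, and otherwise $a_{(i,j)}=1$ (resp. $-1$) if $e_{(i,j)}$ is in the Northern (resp. Southern) Hemisphere. For odd $n$, $M_n=(a_{(i,j)})$ is the $n\times n$ matrix with $a_{(i,j)}=0$ if $j\le i+1$ or $(i,j)=(1,n)$; otherwise $a_{(i,j)}=1$ if ($j\ge i+2$ and $\frac{n+3}{2}-i\le j\le n-i$) or ($j\ge i+2$ and $j\ge\frac{3n+1}{2}-i$); and $a_{(i,j)}=-1$ in all other cases. *)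

theory Defs
  imports Main
begin

text \<open>Vertices of K_n are 1..n, lying on the Hamiltonian cycle H = v1 v2 ... vn v1
 in this cyclic order. Edge (i,j) is written with i < j.\<close>

datatype hemisphere = North | South

definition is_edge :: "nat \<Rightarrow> nat \<Rightarrow> nat \<Rightarrow> bool" where
  "is_edge n i j \<longleftrightarrow> 1 \<le> i \<and> i < j \<and> j \<le> n"

definition is_H_edge :: "nat \<Rightarrow> nat \<Rightarrow> nat \<Rightarrow> bool" where
  "is_H_edge n i j \<longleftrightarrow> is_edge n i j \<and> (j = i + 1 \<or> (i = 1 \<and> j = n))"

definition non_H_edge :: "nat \<Rightarrow> nat \<Rightarrow> nat \<Rightarrow> bool" where
  "non_H_edge n i j \<longleftrightarrow> is_edge n i j \<and> \<not> is_H_edge n i j"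

text \<open>A based diagram (D;H) of (K_n;H) is determined (as in the paper's drawings) by the
 hemisphere in which each edge not in H is drawn: hem i j for non_H_edge n i j.\<close>

definition alternate :: "nat \<Rightarrow> nat \<Rightarrow> nat \<Rightarrow> nat \<Rightarrow> bool" where
  "alternate i j k l \<longleftrightarrow> (i < k \<and> k < j \<and> j < l) \<or> (k < i \<and> i < l \<and> l < j)"

text \<open>Two edge diagrams not in H intersect in their interiors iff they lie in the same
 hemisphere and their endpoints alternate; edges of H (on the equator) meet the other edge
 diagrams only at endpoints.\<close>
definition cross :: "nat \<Rightarrow> (nat \<Rightarrow> nat \<Rightarrow> hemisphere) \<Rightarrow> nat \<Rightarrow> nat \<Rightarrow> nat \<Rightarrow> nat \<Rightarrow> bool" where
  "cross n hem i j k l \<longleftrightarrow> non_H_edge n i j \<and> non_H_edge n k l \<and>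
      hem i j = hem k l \<and> alternate i j k l"

definition cD :: "nat \<Rightarrow> (nat \<Rightarrow> nat \<Rightarrow> hemisphere) \<Rightarrow> nat \<Rightarrow> nat \<Rightarrow> nat" where
  "cD n hem i j = card {(k, l). is_edge n k l \<and> cross n hem i j k l}"

definition MDH :: "nat \<Rightarrow> (nat \<Rightarrow> nat \<Rightarrow> hemisphere) \<Rightarrow> nat \<Rightarrow> nat \<Rightarrow> int" where
  "MDH n hem i j = (if j \<le> i + 1 \<or> (i = 1 \<and> j = n) then 0
                    else if hem i j = North then 1 else -1)"

definition Mn :: "nat \<Rightarrow> nat \<Rightarrow> nat \<Rightarrow> int" where
  "Mn n i j = (if j \<le> i + 1 \<or> (i = 1 \<and> j = n) then 0
     else if (int j \<ge> int i + 2 \<and> (int n + 3) div 2 - int i \<le> int j \<and> int j \<le> int n - int i)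
           \<or> (int j \<ge> int i + 2 \<and> int j \<ge> (3 * int n + 1) div 2 - int i) then 1
     else -1)"

end

theory Submission
  imports Defs
begin

text \<open>With n = 2m - 1, the matrix M_n puts the edge (k,l) in the Northern Hemisphere exactly
  when k + l lies in [m+1, n] or k + l \<ge> 3m - 1. Hence all hemispheres are explicit, and the
  three crossing sets can be listed: the edges crossing e_(m,n) are those crossing e_(1,m)
  together with the edges (1,l), m < l < n, while the edges crossing e_(2,n) are the edges
  (1,l), 3 \<le> l < m. Counting gives (m - 2) = (m - 3) + 1.\<close>

definition Mn_north :: "nat \<Rightarrow> nat \<Rightarrow> nat \<Rightarrow> bool" where
  "Mn_north m k l \<longleftrightarrow> (m + 1 \<le> k + l \<and> k + l + 1 \<le> 2 * m) \<or> 3 * m \<le> k + l + 1"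

definition crossing_edges :: "nat \<Rightarrow> (nat \<Rightarrow> nat \<Rightarrow> hemisphere) \<Rightarrow> nat \<Rightarrow> nat \<Rightarrow> (nat \<times> nat) set" where
  "crossing_edges n hem i j = {(k, l). is_edge n k l \<and> cross n hem i j k l}"

lemma cD_eq_card_crossing_edges: "cD n hem i j = card (crossing_edges n hem i j)"
  unfolding cD_def crossing_edges_def ..

lemma Mn_nonzero_eq:
  assumes "n + 1 = 2 * m" and "\<not> (l \<le> k + 1 \<or> (k = 1 \<and> l = n))"
  shows "Mn n k l = (if Mn_north m k l then 1 else -1)"
proof -
  have "(int n + 3) div 2 = int m + 1" and "(3 * int n + 1) div 2 = 3 * int m - 1"
    using assms(1) by presburger+
  then show ?thesis
    using assms unfolding Mn_def Mn_north_def by auto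
qed

lemma hem_North_iff_Mn_north:
  assumes "n + 1 = 2 * m"
    and M: "\<forall>i\<in>{1..n}. \<forall>j\<in>{1..n}. MDH n hem i j = Mn n i j"
    and "non_H_edge n k l"
  shows "hem k l = North \<longleftrightarrow> Mn_north m k l"
proof -
  have kl: "k \<in> {1..n}" "l \<in> {1..n}" "\<not> (l \<le> k + 1 \<or> (k = 1 \<and> l = n))"
    using assms(3) unfolding non_H_edge_def is_H_edge_def is_edge_def by auto
  have "(if hem k l = North then 1 else -1) = MDH n hem k l"
    using kl(3) unfolding MDH_def by simp
  also have "\<dots> = (if Mn_north m k l then 1 else (-1 :: int))"
    using M kl Mn_nonzero_eq[OF assms(1) kl(3)] by simp
  finally show ?thesis by (auto split: if_splits)
qed

lemma cross_iff_Mn_north: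
  assumes "n + 1 = 2 * m"
    and "\<forall>i\<in>{1..n}. \<forall>j\<in>{1..n}. MDH n hem i j = Mn n i j"
  shows "cross n hem i j k l \<longleftrightarrow> non_H_edge n i j \<and> non_H_edge n k l \<and>
      (Mn_north m i j \<longleftrightarrow> Mn_north m k l) \<and> alternate i j k l"
  using hem_North_iff_Mn_north[OF assms, of i j] hem_North_iff_Mn_north[OF assms, of k l]
  unfolding cross_def by (metis hemisphere.exhaust)

lemma crossing_edges_1_m:
  assumes "n + 1 = 2 * m"
    and "\<forall>i\<in>{1..n}. \<forall>j\<in>{1..n}. MDH n hem i j = Mn n i j"
  shows "crossing_edges n hem 1 m = {(k, l). 2 \<le> k \<and> m < l \<and> k + l \<le> n}"
  using assms(1) by (auto simp: crossing_edges_def cross_iff_Mn_north[OF assms]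
    non_H_edge_def is_H_edge_def is_edge_def alternate_def Mn_north_def)

lemma crossing_edges_m_n:
  assumes "n + 1 = 2 * m"
    and "\<forall>i\<in>{1..n}. \<forall>j\<in>{1..n}. MDH n hem i j = Mn n i j"
  shows "crossing_edges n hem m n = crossing_edges n hem 1 m \<union> Pair 1 ` {m<..<n}"
  using assms(1) by (auto simp: crossing_edges_1_m[OF assms] crossing_edges_def
    cross_iff_Mn_north[OF assms] non_H_edge_def is_H_edge_def is_edge_def alternate_def Mn_north_def)

lemma crossing_edges_2_n:
  assumes "n + 1 = 2 * m"
    and "\<forall>i\<in>{1..n}. \<forall>j\<in>{1..n}. MDH n hem i j = Mn n i j"
  shows "crossing_edges n hem 2 n = Pair 1 ` {3..<m}"
  using assms(1) by (auto simp: crossing_edges_def cross_iff_Mn_north[OF assms]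
    non_H_edge_def is_H_edge_def is_edge_def alternate_def Mn_north_def)

theorem lemma3p2:
  fixes n m :: nat and hem :: "nat \<Rightarrow> nat \<Rightarrow> hemisphere"
  assumes "odd n" and "n \<ge> 5" and "m = (n + 1) div 2"
    and "\<forall>i\<in>{1..n}. \<forall>j\<in>{1..n}. MDH n hem i j = Mn n i j"
  shows "cD n hem m n = cD n hem 1 m + cD n hem 2 n + 1"
proof -
  have nm: "n + 1 = 2 * m" using assms(1,3) by presburger
  have "finite (crossing_edges n hem 1 m)"
    unfolding crossing_edges_def is_edge_def
    by (rule finite_subset[of _ "{..n} \<times> {..n}"]) auto
  moreover have "crossing_edges n hem 1 m \<inter> Pair 1 ` {m<..<n} = {}"
    using crossing_edges_1_m[OF nm assms(4)] by auto
  ultimately have "cD n hem m n = cD n hem 1 m + card (Pair (1::nat) ` {m<..<n})"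
    by (simp add: cD_eq_card_crossing_edges crossing_edges_m_n[OF nm assms(4)] card_Un_disjoint)
  moreover have "cD n hem 2 n = card (Pair (1::nat) ` {3..<m})"
    by (simp add: cD_eq_card_crossing_edges crossing_edges_2_n[OF nm assms(4)])
  ultimately show ?thesis
    using nm assms(2) by (simp add: card_image inj_on_def)
qed

end
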